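(* Let $m, n, k, l, t, r$ be positive integers satisfying $k\geq l \geq t+r$ and $\min\{m, n\}\geq k+l-t+2$. Let $T$ be a $(t+2r)$-element subset of $[\min\{m,n\}]$ and fix $j\in [\min\{m,n\}]\setminus T$. For any $A\in \binom{[n]\setminus (T\cup \{j\})}{k-r-t}$ and $B \in \binom{[m]\setminus (T\cup \{j\})}{l-r-t}$ with $|A\cap B|=w$, there exist $A_1, A_2, \ldots, A_{w+1} \in \binom{[n]\setminus (T\cup \{j\})}{k-r-t}$ and $B_1, B_2, \ldots, B_{w+1} \in \binom{[m]\setminus (T\cup \{j\})}{l-r-t}$ such that (1) $A_i \cap B_i=\emptyset$ for $i=1,\ldots, w+1$; (2) $A_{i+1} \cap B_i=\emptyset$ for $i=1,\ldots, w$; (3) $A_1=A$ and $B_{w+1}=B$.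
   Context: $[n]=\{1,\dots,n\}$ and $\binom{D}{k}$ denotes the family of all $k$-element subsets of a finite set $D$. *)

theory Defs
  imports Main
begin

definition ksubsets :: "'a set \<Rightarrow> nat \<Rightarrow> 'a set set" where
  "ksubsets D k = {S. S \<subseteq> D \<and> card S = k}"

end

theory Submission
  imports Defs
begin

text \<open>If \<open>A\<close> meets \<open>B\<close> in \<open>x\<close>, exchange \<open>x\<close> for an element \<open>y\<close> of \<open>UA \<inter> UB\<close> outside
  \<open>A \<union> B\<close>, giving \<open>A'\<close> that meets \<open>B\<close> in one element fewer, and choose \<open>B' \<subseteq> UA \<inter> UB\<close>
  avoiding \<open>A \<union> {y}\<close>; then \<open>A, B', A'\<close> starts a walk in the disjointness graph.
  Both choices are possible once \<open>UA \<inter> UB\<close> has \<open>card A + card B + 1\<close> elements, and induction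
  on \<open>card (A \<inter> B)\<close> ends at a set disjoint from \<open>B\<close>. In the theorem \<open>UA \<inter> UB\<close> is
  \<open>{1..min m n} - (T \<union> {j})\<close>, which is just large enough.\<close>

definition disjoint_walk ::
    "'a set \<Rightarrow> nat \<Rightarrow> 'a set \<Rightarrow> nat \<Rightarrow> (nat \<Rightarrow> 'a set) \<Rightarrow> (nat \<Rightarrow> 'a set) \<Rightarrow> nat \<Rightarrow> bool" where
  "disjoint_walk UA a UB b As Bs w \<longleftrightarrow>
    (\<forall>i\<in>{1..w+1}. As i \<in> ksubsets UA a \<and> Bs i \<in> ksubsets UB b) \<and>
    (\<forall>i\<in>{1..w+1}. As i \<inter> Bs i = {}) \<and>
    (\<forall>i\<in>{1..w}. As (i + 1) \<inter> Bs i = {})"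

lemma disjoint_walk_0:
  assumes "A \<in> ksubsets UA a" "B \<in> ksubsets UB b" "A \<inter> B = {}"
  shows "disjoint_walk UA a UB b (\<lambda>_. A) (\<lambda>_. B) 0"
  using assms by (simp add: disjoint_walk_def)

lemma disjoint_walk_Cons:
  assumes walk: "disjoint_walk UA a UB b As Bs w"
    and A: "A \<in> ksubsets UA a" and B: "B \<in> ksubsets UB b"
    and "A \<inter> B = {}" and "As 1 \<inter> B = {}"
  shows "disjoint_walk UA a UB b
           (\<lambda>i. if i = 1 then A else As (i - 1)) (\<lambda>i. if i = 1 then B else Bs (i - 1)) (Suc w)"
proof -
  from walk have
    members: "\<forall>i\<in>{1..w+1}. As i \<in> ksubsets UA a \<and> Bs i \<in> ksubsets UB b" and
    diagonal: "\<forall>i\<in>{1..w+1}. As i \<inter> Bs i = {}" and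
    offdiagonal: "\<forall>i\<in>{1..w}. As (i + 1) \<inter> Bs i = {}"
    by (simp_all add: disjoint_walk_def)
  have shift: "i - 1 \<in> {1..v}" "i - 1 + 1 = i" if "i \<in> {1..Suc v}" "i \<noteq> 1" for i v :: nat
    using that by auto
  show ?thesis
    unfolding disjoint_walk_def
  proof (intro conjI ballI)
    fix i assume "i \<in> {1..Suc w + 1}"
    then have i: "i \<in> {1..Suc (Suc w)}" by simp
    have "As (i - 1) \<in> ksubsets UA a \<and> Bs (i - 1) \<in> ksubsets UB b \<and> As (i - 1) \<inter> Bs (i - 1) = {}"
      if "i \<noteq> 1"
      using members diagonal shift(1)[OF i that] by simp
    then show "(if i = 1 then A else As (i - 1)) \<in> ksubsets UA a"
      and "(if i = 1 then B else Bs (i - 1)) \<in> ksubsets UB b"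
      and "(if i = 1 then A else As (i - 1)) \<inter> (if i = 1 then B else Bs (i - 1)) = {}"
      using A B \<open>A \<inter> B = {}\<close> by simp_all
  next
    fix i assume i: "i \<in> {1..Suc w}"
    have "As i \<inter> Bs (i - 1) = {}" if "i \<noteq> 1"
      using offdiagonal[rule_format, OF shift(1)[OF i that]] shift(2)[OF i that] by simp
    then show "(if i + 1 = 1 then A else As (i + 1 - 1)) \<inter> (if i = 1 then B else Bs (i - 1)) = {}"
      using \<open>As 1 \<inter> B = {}\<close> i by auto
  qed
qed

lemma ksubsets_exchange:
  assumes "finite UA" "finite UB" and large: "a + b + 1 \<le> card (UA \<inter> UB)"
    and A: "A \<in> ksubsets UA a" and B: "B \<in> ksubsets UB b" and "A \<inter> B \<noteq> {}"
  obtains A' B' where "A' \<in> ksubsets UA a" "B' \<in> ksubsets UB b" "A \<inter> B' = {}" "A' \<inter> B' = {}"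
    "card (A' \<inter> B) = card (A \<inter> B) - 1"
proof -
  from A B have AU: "A \<subseteq> UA" "card A = a" and BU: "B \<subseteq> UB" "card B = b"
    by (simp_all add: ksubsets_def)
  with assms(1,2) have "finite A" "finite B" by (auto intro: finite_subset)
  obtain x where x: "x \<in> A \<inter> B" using \<open>A \<inter> B \<noteq> {}\<close> by blast
  have "card (A \<inter> B) > 0" using x \<open>finite A\<close> by (auto simp: card_gt_0_iff)
  then have "card (A \<union> B) < card (UA \<inter> UB)"
    using card_Un_Int[OF \<open>finite A\<close> \<open>finite B\<close>] AU BU large by linarith
  then obtain y where y: "y \<in> UA \<inter> UB" "y \<notin> A \<union> B"
    using card_mono[OF finite_UnI[OF \<open>finite A\<close> \<open>finite B\<close>]] by (metis less_le_not_le subsetI)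
  have "card (insert y A) = a + 1" using y \<open>finite A\<close> AU by simp
  then have "b \<le> card (UA \<inter> UB - insert y A)"
    using diff_card_le_card_Diff[of "insert y A" "UA \<inter> UB"] \<open>finite A\<close> large by simp
  then obtain B' where B': "B' \<subseteq> UA \<inter> UB - insert y A" "card B' = b"
    by (rule obtain_subset_with_card_n)
  define A' where "A' = insert y (A - {x})"
  have "a > 0" using x \<open>finite A\<close> AU(2) by (auto simp: card_gt_0_iff)
  then have "card A' = a" using x y \<open>finite A\<close> AU(2) by (simp add: A'_def)
  moreover have "A' \<inter> B = A \<inter> B - {x}" using y by (auto simp: A'_def)
  ultimately show thesis
    using that[of A' B'] x y AU B' \<open>finite A\<close> by (auto simp: A'_def ksubsets_def)
qed

lemma disjoint_walk_exists:
  assumes "finite UA" "finite UB" "a + b + 1 \<le> card (UA \<inter> UB)"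
    and "A \<in> ksubsets UA a" "B \<in> ksubsets UB b"
  shows "\<exists>As Bs. disjoint_walk UA a UB b As Bs (card (A \<inter> B)) \<and>
           As 1 = A \<and> Bs (card (A \<inter> B) + 1) = B"
  using assms(4)
proof (induction "card (A \<inter> B)" arbitrary: A)
  case 0
  have "finite A"
    using assms(1) "0.prems" by (auto simp: ksubsets_def intro: finite_subset)
  with "0.hyps" have "A \<inter> B = {}" by simp
  then show ?case
    using disjoint_walk_0[OF "0.prems" assms(5)] "0.hyps"[symmetric] by auto
next
  case (Suc w)
  then have "A \<inter> B \<noteq> {}" by auto
  with ksubsets_exchange[OF assms(1-3) Suc.prems assms(5)]
  obtain A' B' where "A' \<in> ksubsets UA a" and B': "B' \<in> ksubsets UB b"
    and "A \<inter> B' = {}" "A' \<inter> B' = {}" and "card (A' \<inter> B) = w"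
    by (metis Suc.hyps(2) diff_Suc_1)
  with Suc.hyps(1) obtain As Bs where
    walk: "disjoint_walk UA a UB b As Bs w" and "As 1 = A'" "Bs (w + 1) = B"
    by metis
  have "disjoint_walk UA a UB b
          (\<lambda>i. if i = 1 then A else As (i - 1)) (\<lambda>i. if i = 1 then B' else Bs (i - 1)) (Suc w)"
    using disjoint_walk_Cons[OF walk Suc.prems B' \<open>A \<inter> B' = {}\<close>] \<open>As 1 = A'\<close> \<open>A' \<inter> B' = {}\<close>
    by simp
  with \<open>Bs (w + 1) = B\<close> show ?case
    unfolding Suc.hyps(2)[symmetric] by force
qed

theorem lemma4p3:
  fixes m n k l t r w :: nat and T :: "nat set" and j :: nat and A B :: "nat set"
  assumes "m > 0" "n > 0" "k > 0" "l > 0" "t > 0" "r > 0"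
    and "k \<ge> l" "l \<ge> t + r"
    and "min m n \<ge> k + l - t + 2"
    and "T \<in> ksubsets {1..min m n} (t + 2 * r)"
    and "j \<in> {1..min m n} - T"
    and "A \<in> ksubsets ({1..n} - (T \<union> {j})) (k - r - t)"
    and "B \<in> ksubsets ({1..m} - (T \<union> {j})) (l - r - t)"
    and "card (A \<inter> B) = w"
  shows "\<exists>As Bs :: nat \<Rightarrow> nat set.
    (\<forall>i\<in>{1..w+1}. As i \<in> ksubsets ({1..n} - (T \<union> {j})) (k - r - t)
                  \<and> Bs i \<in> ksubsets ({1..m} - (T \<union> {j})) (l - r - t)) \<and>
    (\<forall>i\<in>{1..w+1}. As i \<inter> Bs i = {}) \<and>
    (\<forall>i\<in>{1..w}. As (i + 1) \<inter> Bs i = {}) \<and>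
    As 1 = A \<and> Bs (w + 1) = B"
proof -
  have T: "T \<union> {j} \<subseteq> {1..min m n}" "card (T \<union> {j}) = t + 2 * r + 1"
    using assms(10,11) by (auto simp: ksubsets_def card_insert_if finite_subset)
  have "({1..n} - (T \<union> {j})) \<inter> ({1..m} - (T \<union> {j})) = {1..min m n} - (T \<union> {j})"
    by auto
  moreover have "card ({1..min m n} - (T \<union> {j})) = min m n - (t + 2 * r + 1)"
    using card_Diff_subset[OF finite_subset[OF T(1)] T(1)] T(2) by simp
  moreover have "(k - r - t) + (l - r - t) + 1 \<le> min m n - (t + 2 * r + 1)"
    using assms(7-9) by linarith
  ultimately have "(k - r - t) + (l - r - t) + 1
      \<le> card (({1..n} - (T \<union> {j})) \<inter> ({1..m} - (T \<union> {j})))"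
    by metis
  from disjoint_walk_exists[OF _ _ this assms(12,13)] assms(14) show ?thesis
    by (simp add: disjoint_walk_def)
qed

end
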